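(* Let $n\geq 4$, let $S$ be the set of all $3$-cycles in $S_n$, and let $CAG_n=\mathrm{Cay}(A_n,S)$. Then $$\mathrm{Aut}(CAG_n)\supseteq (R(A_n)\rtimes \mathrm{Inn}(S_n))\rtimes \mathbb{Z}_2\cong (A_n\rtimes S_n)\rtimes \mathbb{Z}_2,$$ where $R(A_n)$ is the right regular representation of $A_n$, $\mathrm{Inn}(S_n)$ is the inner automorphism group of $S_n$ (acting on $A_n$ by conjugation), and $\mathbb{Z}_2=\langle h\rangle$ with $h$ the map $\alpha\mapsto\alpha^{-1}$ for all $\alpha\in A_n$.
   Context: For a finite group $\Gamma$ and a subset $T\subseteq\Gamma$ with $e\notin T$ and $T=T^{-1}$, the Cayley graph $\mathrm{Cay}(\Gamma,T)$ is the undirected graph with vertex set $\Gamma$ and edge set $\{\{\gamma,t\gamma\}\mid \gamma\in\Gamma, t\in T\}$. The right regular representation is $R(\Gamma)=\{r_\gamma: x\mapsto x\gamma\mid\gamma\in\Gamma\}$. *)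

theory Defs
  imports "HOL-Algebra.Algebra"
begin

definition cay_edges :: "('a, 'c) monoid_scheme \<Rightarrow> 'a set \<Rightarrow> 'a set set" where
  "cay_edges G T = {{g, t \<otimes>\<^bsub>G\<^esub> g} | g t. g \<in> carrier G \<and> t \<in> T}"

definition cay_auts :: "('a, 'c) monoid_scheme \<Rightarrow> 'a set \<Rightarrow> ('a \<Rightarrow> 'a) set" where
  "cay_auts G T = {f \<in> Bij (carrier G). \<forall>x \<in> carrier G. \<forall>y \<in> carrier G.
      ({x, y} \<in> cay_edges G T \<longleftrightarrow> {f x, f y} \<in> cay_edges G T)}"

definition cay_aut_group :: "('a, 'c) monoid_scheme \<Rightarrow> 'a set \<Rightarrow> ('a \<Rightarrow> 'a) monoid" where
  "cay_aut_group G T = (BijGroup (carrier G)) \<lparr>carrier := cay_auts G T\<rparr>"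

definition semidirect :: "('a, 'c) monoid_scheme \<Rightarrow> ('b, 'd) monoid_scheme \<Rightarrow> ('b \<Rightarrow> 'a \<Rightarrow> 'a)
    \<Rightarrow> ('a \<times> 'b) monoid" where
  "semidirect N H phi = \<lparr> carrier = carrier N \<times> carrier H,
     monoid.mult = (\<lambda>(n1, h1) (n2, h2). (n1 \<otimes>\<^bsub>N\<^esub> phi h1 n2, h1 \<otimes>\<^bsub>H\<^esub> h2)),
     one = (\<one>\<^bsub>N\<^esub>, \<one>\<^bsub>H\<^esub>) \<rparr>"

end

(*
  The group (A_n \<rtimes> S_n) \<rtimes> Z_2 acts on A_n by x \<mapsto> s x^(\<plusminus>1) s^-1 a^-1.  Each such map
  sends the quotient y x^-1 of two vertices to a conjugate of y x^-1 or of its inverse, and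
  the set of 3-cycles is closed under both operations, so the action is by automorphisms of
  CAG_n.  For n \<ge> 4 it is faithful: A_n has trivial centralizer in S_n and is nonabelian, so
  inversion is not a conjugation.  Thus the action embeds the group multiplicatively into the
  finite group Aut(CAG_n), and every subgroup, normality, intersection and isomorphism claim
  is transported from the corresponding (evident) statement about the semidirect product.
*)
theory Submission
  imports Defs
begin

section \<open>Multiplicative embeddings into finite groups\<close>

lemma (in group) finite_closed_subgroup:
  assumes "finite (carrier G)" and "H \<subseteq> carrier G" and "H \<noteq> {}"
    and closed: "\<And>a b. a \<in> H \<Longrightarrow> b \<in> H \<Longrightarrow> a \<otimes> b \<in> H"
  shows "subgroup H G"
proof (rule subgroupI[OF assms(2,3) _ closed])
  fix a assume a: "a \<in> H"
  hence aG: "a \<in> carrier G" using assms(2) by blast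
  have pow_in: "a [^] Suc k \<in> H" for k
    by (induction k) (use a aG closed in \<open>simp_all add: nat_pow_Suc\<close>)
  have "order G \<noteq> 0" using assms(1) order_gt_0_iff_finite by blast
  then obtain m where m: "Suc (Suc m) = order G * 2" by (metis mult_2_right add_is_0 not0_implies_Suc add_Suc)
  have "a [^] Suc m \<otimes> a = (a [^] order G) [^] (2::nat)"
    using aG by (simp only: nat_pow_Suc[symmetric] m nat_pow_pow)
  hence "a [^] Suc m \<otimes> a = \<one>" using aG by (simp add: pow_order_eq_1)
  hence "inv a = a [^] Suc m" using inv_equality aG by simp
  thus "inv a \<in> H" using pow_in by simp
qed

lemma bij_hom_imp_is_iso_sym:
  assumes hom: "f \<in> hom G H" and bij: "bij_betw f (carrier G) (carrier H)"
    and closed: "\<And>x y. x \<in> carrier G \<Longrightarrow> y \<in> carrier G \<Longrightarrow> x \<otimes>\<^bsub>G\<^esub> y \<in> carrier G"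
  shows "H \<cong> G"
proof -
  let ?g = "inv_into (carrier G) f"
  have g_bij: "bij_betw ?g (carrier H) (carrier G)" by (rule bij_betw_inv_into[OF bij])
  hence g_in: "?g x \<in> carrier G" if "x \<in> carrier H" for x using that bij_betwE by blast
  have "?g (x \<otimes>\<^bsub>H\<^esub> y) = ?g x \<otimes>\<^bsub>G\<^esub> ?g y" if "x \<in> carrier H" "y \<in> carrier H" for x y
  proof (rule inv_into_f_eq)
    show "inj_on f (carrier G)" using bij bij_betw_def by blast
    show "?g x \<otimes>\<^bsub>G\<^esub> ?g y \<in> carrier G" using closed g_in that by blast
    show "f (?g x \<otimes>\<^bsub>G\<^esub> ?g y) = x \<otimes>\<^bsub>H\<^esub> y"
      using hom g_in that bij_betw_inv_into_right[OF bij] by (simp add: hom_mult)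
  qed
  hence "?g \<in> hom H G" using g_in by (intro homI) auto
  thus ?thesis using g_bij unfolding is_iso_def iso_def by blast
qed

text \<open>\<open>B\<close> is not required to be a group: its group-theoretic properties are only ever read
  off its image in \<open>G\<close>.\<close>
locale finite_group_embedding = group G for G (structure) +
  fixes B :: "('e, 'f) monoid_scheme" and \<Phi> :: "'e \<Rightarrow> 'a"
  assumes finite_carrier: "finite (carrier G)"
    and embed_closed: "P \<in> carrier B \<Longrightarrow> \<Phi> P \<in> carrier G"
    and embed_inj: "inj_on \<Phi> (carrier B)"
    and embed_mult: "P \<in> carrier B \<Longrightarrow> Q \<in> carrier B \<Longrightarrow> \<Phi> (P \<otimes>\<^bsub>B\<^esub> Q) = \<Phi> P \<otimes> \<Phi> Q"
begin

lemma image_subgroup: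
  assumes "K \<subseteq> carrier B" "K \<noteq> {}" and closed: "\<And>P Q. P \<in> K \<Longrightarrow> Q \<in> K \<Longrightarrow> P \<otimes>\<^bsub>B\<^esub> Q \<in> K"
  shows "subgroup (\<Phi> ` K) G"
proof (rule finite_closed_subgroup[OF finite_carrier])
  show "\<Phi> ` K \<subseteq> carrier G" using assms(1) embed_closed by blast
  show "\<Phi> ` K \<noteq> {}" using assms(2) by blast
  fix f g assume "f \<in> \<Phi> ` K" "g \<in> \<Phi> ` K"
  then obtain P Q where "P \<in> K" "Q \<in> K" "f = \<Phi> P" "g = \<Phi> Q" by blast
  thus "f \<otimes> g \<in> \<Phi> ` K" using assms(1) closed embed_mult by (metis image_eqI subsetD)
qed

lemma image_set_mult:
  assumes "K \<subseteq> carrier B" "L \<subseteq> carrier B"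
  shows "\<Phi> ` K <#> \<Phi> ` L = \<Phi> ` (K <#>\<^bsub>B\<^esub> L)"
proof -
  have "\<Phi> P \<otimes> \<Phi> Q = \<Phi> (P \<otimes>\<^bsub>B\<^esub> Q)" if "P \<in> K" "Q \<in> L" for P Q
    using assms that by (metis embed_mult subsetD)
  thus ?thesis unfolding set_mult_def image_UN by (simp cong: SUP_cong_simp)
qed

lemma image_iso:
  assumes "K \<subseteq> carrier B" and e: "bij_betw e (carrier H) K"
    and e_mult: "\<And>x y. x \<in> carrier H \<Longrightarrow> y \<in> carrier H \<Longrightarrow> e (x \<otimes>\<^bsub>H\<^esub> y) = e x \<otimes>\<^bsub>B\<^esub> e y"
    and closed: "\<And>x y. x \<in> carrier H \<Longrightarrow> y \<in> carrier H \<Longrightarrow> x \<otimes>\<^bsub>H\<^esub> y \<in> carrier H"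
  shows "G\<lparr>carrier := \<Phi> ` K\<rparr> \<cong> H"
proof (rule bij_hom_imp_is_iso_sym[OF _ _ closed])
  have eK: "e x \<in> K" if "x \<in> carrier H" for x using e that bij_betwE by blast
  show "\<Phi> \<circ> e \<in> hom H (G\<lparr>carrier := \<Phi> ` K\<rparr>)"
    using eK e_mult embed_mult assms(1) closed by (intro homI) (auto simp: subset_iff)
  have "bij_betw \<Phi> K (\<Phi> ` K)" using inj_on_subset[OF embed_inj assms(1)] by (rule inj_on_imp_bij_betw)
  thus "bij_betw (\<Phi> \<circ> e) (carrier H) (carrier (G\<lparr>carrier := \<Phi> ` K\<rparr>))"
    using bij_betw_trans[OF e] by simp
qed

lemma image_normal:
  assumes K: "K \<subseteq> carrier B" "K \<noteq> {}" "\<And>P Q. P \<in> K \<Longrightarrow> Q \<in> K \<Longrightarrow> P \<otimes>\<^bsub>B\<^esub> Q \<in> K"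
    and "group H" and \<pi>_closed: "\<And>P. P \<in> K \<Longrightarrow> \<pi> P \<in> carrier H"
    and \<pi>_mult: "\<And>P Q. P \<in> K \<Longrightarrow> Q \<in> K \<Longrightarrow> \<pi> (P \<otimes>\<^bsub>B\<^esub> Q) = \<pi> P \<otimes>\<^bsub>H\<^esub> \<pi> Q"
  shows "\<Phi> ` {P \<in> K. \<pi> P = \<one>\<^bsub>H\<^esub>} \<lhd> G\<lparr>carrier := \<Phi> ` K\<rparr>"
proof -
  let ?GK = "G\<lparr>carrier := \<Phi> ` K\<rparr>" and ?\<rho> = "\<lambda>f. \<pi> (inv_into K \<Phi> f)"
  have inj: "inj_on \<Phi> K" using inj_on_subset[OF embed_inj K(1)] .
  have \<rho>: "?\<rho> (\<Phi> P) = \<pi> P" if "P \<in> K" for P using inv_into_f_f[OF inj that] by simp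
  have "group ?GK" using subgroup.subgroup_is_group[OF image_subgroup[OF K] is_group] .
  moreover have "?\<rho> \<in> hom ?GK H"
  proof (rule homI)
    fix f g assume "f \<in> carrier ?GK" "g \<in> carrier ?GK"
    then obtain P Q where "P \<in> K" "Q \<in> K" "f = \<Phi> P" "g = \<Phi> Q" by auto
    thus "?\<rho> (f \<otimes>\<^bsub>?GK\<^esub> g) = ?\<rho> f \<otimes>\<^bsub>H\<^esub> ?\<rho> g"
      using \<rho> \<pi>_mult K embed_mult[symmetric] by (auto simp: subset_iff)
  qed (use \<rho> \<pi>_closed in auto)
  ultimately have "kernel ?GK H ?\<rho> \<lhd> ?GK"
    using \<open>group H\<close> by (intro group_hom.normal_kernel) (simp add: group_hom_def group_hom_axioms_def)
  moreover have "kernel ?GK H ?\<rho> = \<Phi> ` {P \<in> K. \<pi> P = \<one>\<^bsub>H\<^esub>}"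
    using \<rho> by (force simp: kernel_def)
  ultimately show ?thesis by simp
qed

end

lemma (in group) cay_edges_iff:
  assumes T: "T \<subseteq> carrier G" "\<And>t. t \<in> T \<Longrightarrow> inv t \<in> T"
    and x: "x \<in> carrier G" and y: "y \<in> carrier G"
  shows "{x, y} \<in> cay_edges G T \<longleftrightarrow> y \<otimes> inv x \<in> T"
proof
  assume "{x, y} \<in> cay_edges G T"
  then obtain g t where xy: "{x, y} = {g, t \<otimes> g}" and g: "g \<in> carrier G" and t: "t \<in> T"
    by (auto simp: cay_edges_def)
  have tG: "t \<in> carrier G" using T(1) t by blast
  from xy consider "x = g" "y = t \<otimes> g" | "x = t \<otimes> g" "y = g"
    by (auto simp: doubleton_eq_iff)
  thus "y \<otimes> inv x \<in> T"
  proof cases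
    case 1
    thus ?thesis using g tG t by (simp add: m_assoc)
  next
    case 2
    hence "y \<otimes> inv x = inv t" using g tG by (simp add: inv_mult_group flip: m_assoc)
    thus ?thesis using T(2) t by simp
  qed
next
  assume t: "y \<otimes> inv x \<in> T"
  have "{x, y} = {x, (y \<otimes> inv x) \<otimes> x}" using x y by (simp add: m_assoc)
  thus "{x, y} \<in> cay_edges G T" using x t unfolding cay_edges_def by blast
qed

abbreviation Alt :: "nat \<Rightarrow> (nat \<Rightarrow> nat) set" where "Alt n \<equiv> carrier (alt_group n)"
abbreviation Sym :: "nat \<Rightarrow> (nat \<Rightarrow> nat) set" where "Sym n \<equiv> carrier (sym_group n)"

lemma bij_o_inv_cancel: "bij f \<Longrightarrow> f \<circ> inv' f = id"
  by (simp add: bij_is_surj surj_iff[symmetric])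
lemma bij_o_inv_o_cancel: "bij f \<Longrightarrow> f \<circ> (inv' f \<circ> g) = g"
  by (simp add: bij_o_inv_cancel flip: comp_assoc)
lemma bij_inv_o_cancel: "bij f \<Longrightarrow> inv' f \<circ> f = id"
  by (simp add: bij_is_inj)
lemma bij_inv_o_o_cancel: "bij f \<Longrightarrow> inv' f \<circ> (f \<circ> g) = g"
  by (simp add: bij_is_inj flip: comp_assoc)

lemmas bij_comp_simps = comp_assoc o_inv_distrib inv_inv_eq bij_comp bij_imp_bij_inv
  bij_o_inv_cancel bij_inv_o_cancel bij_o_inv_o_cancel bij_inv_o_o_cancel

lemma sym_bij: "s \<in> Sym n \<Longrightarrow> bij s"
  using sym_group_carrier' permutation_bijective by blast
lemma alt_in_sym: "x \<in> Alt n \<Longrightarrow> x \<in> Sym n"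
  by (simp add: alt_group_carrier sym_group_carrier)
lemma alt_bij: "x \<in> Alt n \<Longrightarrow> bij x"
  using alt_in_sym sym_bij by blast
lemma sym_comp: "s \<in> Sym n \<Longrightarrow> t \<in> Sym n \<Longrightarrow> s \<circ> t \<in> Sym n"
  by (simp add: sym_group_carrier permutes_compose)
lemma alt_comp: "x \<in> Alt n \<Longrightarrow> y \<in> Alt n \<Longrightarrow> x \<circ> y \<in> Alt n"
  using subgroup.m_closed[OF alt_group_is_subgroup] by (simp add: sym_group_mult)

lemma alt_group_normal: "Alt n \<lhd> sym_group n"
  using group_hom.normal_kernel[OF sign_group_hom] by (simp add: alt_group_is_sign_kernel)

lemma alt_conj: "s \<in> Sym n \<Longrightarrow> x \<in> Alt n \<Longrightarrow> s \<circ> x \<circ> inv' s \<in> Alt n"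
  using normal.inv_op_closed2[OF alt_group_normal] by (simp add: sym_group_mult)

lemma three_cycles_conj:
  assumes s: "s \<in> Sym n" and "t \<in> three_cycles n"
  shows "s \<circ> t \<circ> inv' s \<in> three_cycles n"
proof -
  obtain cs where cs: "t = cycle_of_list cs" "distinct cs" "length cs = 3" "set cs \<subseteq> {1..n}"
    using assms(2) by auto
  have "s \<circ> t \<circ> inv' s = cycle_of_list (map s cs)"
    using conjugation_of_cycle[OF cs(2) sym_bij[OF s]] cs(1) by simp
  moreover have "distinct (map s cs)"
    using cs(2) inj_on_subset[OF bij_is_inj[OF sym_bij[OF s]]] by (simp add: distinct_map)
  moreover have "set (map s cs) \<subseteq> {1..n}"
    using cs(4) permutes_image[of s "{1..n}"] s by (auto simp: sym_group_carrier)
  ultimately show ?thesis using cs(3) by force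
qed

lemma three_cycles_inv:
  assumes "t \<in> three_cycles n" shows "inv' t \<in> three_cycles n"
proof -
  obtain cs where cs: "t = cycle_of_list cs" "distinct cs" "length cs = 3" "set cs \<subseteq> {1..n}"
    using assms by auto
  then obtain a b c where abc: "cs = [a, b, c]" using stupid_lemma by blast
  have "cycle_of_list [a, b, c] \<circ> cycle_of_list [c, b, a] = id"
       "cycle_of_list [c, b, a] \<circ> cycle_of_list [a, b, c] = id"
    using cs(2) abc by (auto simp: fun_eq_iff transpose_def)
  hence "inv' t = cycle_of_list [c, b, a]" using inv_unique_comp cs(1) abc by metis
  thus ?thesis using cs abc by (intro CollectI exI[of _ "[c, b, a]"]) auto
qed

lemma three_cycles_conj_iff:
  assumes "s \<in> Sym n"
  shows "s \<circ> z \<circ> inv' s \<in> three_cycles n \<longleftrightarrow> z \<in> three_cycles n"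
proof
  have cancel: "inv' s \<circ> (s \<circ> z \<circ> inv' s) \<circ> inv' (inv' s) = z"
    using sym_bij[OF assms] by (simp add: bij_comp_simps)
  assume "s \<circ> z \<circ> inv' s \<in> three_cycles n"
  from three_cycles_conj[OF sym_group_inv_closed[OF assms] this]
  show "z \<in> three_cycles n" by (simp only: cancel)
qed (rule three_cycles_conj[OF assms])

lemma three_cycles_inv_iff:
  assumes "bij z" shows "inv' z \<in> three_cycles n \<longleftrightarrow> z \<in> three_cycles n"
proof
  assume "inv' z \<in> three_cycles n"
  from three_cycles_inv[OF this] show "z \<in> three_cycles n" by (simp only: inv_inv_eq[OF assms])
qed (rule three_cycles_inv)

lemma alt_cay_edges_iff:
  assumes "x \<in> Alt n" "y \<in> Alt n"
  shows "{x, y} \<in> cay_edges (alt_group n) (three_cycles n) \<longleftrightarrow> y \<circ> inv' x \<in> three_cycles n"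
proof -
  have inv_closed: "inv\<^bsub>alt_group n\<^esub> t \<in> three_cycles n" if "t \<in> three_cycles n" for t
    unfolding alt_group_inv_equality[OF subsetD[OF three_cycles_incl that]]
    by (rule three_cycles_inv[OF that])
  have "y \<otimes>\<^bsub>alt_group n\<^esub> inv\<^bsub>alt_group n\<^esub> x = y \<circ> inv' x"
    by (simp only: alt_group_inv_equality[OF assms(1)] alt_group_mult)
  with group.cay_edges_iff[OF alt_group_is_group three_cycles_incl inv_closed assms]
  show ?thesis by (simp only:)
qed

section \<open>The action of \<open>(A\<^sub>n \<rtimes> S\<^sub>n) \<rtimes> \<int>\<^sub>2\<close> on \<open>A\<^sub>n\<close>\<close>

definition alt_sym :: "nat \<Rightarrow> ((nat \<Rightarrow> nat) \<times> (nat \<Rightarrow> nat)) monoid"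
  where "alt_sym n = semidirect (alt_group n) (sym_group n) (\<lambda>\<sigma> a. \<sigma> \<circ> a \<circ> inv' \<sigma>)"

text \<open>Conjugating the action of \<open>(a, s)\<close> below by inversion gives the action of
  \<open>(inv' a, a \<circ> s)\<close>; this is the action of the generator of \<open>\<int>\<^sub>2\<close>.\<close>
definition flip :: "nat \<Rightarrow> int \<Rightarrow> (nat \<Rightarrow> nat) \<times> (nat \<Rightarrow> nat) \<Rightarrow> (nat \<Rightarrow> nat) \<times> (nat \<Rightarrow> nat)"
  where "flip n k = (if k = 0 then (\<lambda>q \<in> carrier (alt_sym n). q)
                     else (\<lambda>q \<in> carrier (alt_sym n). (inv' (fst q), fst q \<circ> snd q)))"

definition Gamma :: "nat \<Rightarrow> (((nat \<Rightarrow> nat) \<times> (nat \<Rightarrow> nat)) \<times> int) monoid"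
  where "Gamma n = semidirect (alt_sym n) (integer_mod_group 2) (flip n)"

text \<open>Right translation by \<open>inv' a\<close> rather than by \<open>a\<close> makes the action a homomorphism.\<close>
definition cay_act :: "nat \<Rightarrow> ((nat \<Rightarrow> nat) \<times> (nat \<Rightarrow> nat)) \<times> int \<Rightarrow> (nat \<Rightarrow> nat) \<Rightarrow> nat \<Rightarrow> nat"
  where "cay_act n P = (case P of ((a, s), k) \<Rightarrow>
     (\<lambda>x \<in> Alt n. s \<circ> (if k = 0 then x else inv' x) \<circ> inv' s \<circ> inv' a))"

lemma integer_mod_group_2_carrier: "carrier (integer_mod_group 2) = {0, 1}"
  by (auto simp: carrier_integer_mod_group)

lemma alt_sym_carrier: "carrier (alt_sym n) = Alt n \<times> Sym n"
  by (simp add: alt_sym_def semidirect_def)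
lemma alt_sym_mult: "(a, s) \<otimes>\<^bsub>alt_sym n\<^esub> (b, t) = (a \<circ> (s \<circ> b \<circ> inv' s), s \<circ> t)"
  by (simp add: alt_sym_def semidirect_def alt_group_mult sym_group_mult)

lemma Gamma_carrier: "carrier (Gamma n) = (Alt n \<times> Sym n) \<times> {0, 1}"
  by (simp add: Gamma_def semidirect_def alt_sym_carrier integer_mod_group_2_carrier)
lemma Gamma_mult: "(p, k) \<otimes>\<^bsub>Gamma n\<^esub> (q, l) = (p \<otimes>\<^bsub>alt_sym n\<^esub> flip n k q, (k + l) mod 2)"
  by (simp add: Gamma_def semidirect_def)

lemma flip_0: "q \<in> carrier (alt_sym n) \<Longrightarrow> flip n 0 q = q"
  by (simp add: flip_def)
lemma flip_1: "(b, t) \<in> carrier (alt_sym n) \<Longrightarrow> flip n 1 (b, t) = (inv' b, b \<circ> t)"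
  by (simp add: flip_def)

lemma Gamma_closed:
  assumes "P \<in> carrier (Gamma n)" "Q \<in> carrier (Gamma n)"
  shows "P \<otimes>\<^bsub>Gamma n\<^esub> Q \<in> carrier (Gamma n)"
proof -
  obtain a s k b t l where P: "P = ((a, s), k)" and Q: "Q = ((b, t), l)"
    by (metis prod.exhaust)
  have h: "a \<in> Alt n" "s \<in> Sym n" "b \<in> Alt n" "t \<in> Sym n" "k \<in> {0, 1}" "l \<in> {0, 1}"
    using assms P Q by (auto simp: Gamma_carrier)
  have "a \<circ> t \<in> Sym n" using h alt_in_sym sym_comp by blast
  moreover have "a \<circ> (s \<circ> b \<circ> inv' s) \<in> Alt n"
    using alt_comp[OF h(1) alt_conj[OF h(2) h(3)]] .
  moreover have "a \<circ> (s \<circ> inv' b \<circ> inv' s) \<in> Alt n"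
    using alt_comp[OF h(1) alt_conj[OF h(2) alt_group_inv_closed[OF h(3)]]] .
  ultimately show ?thesis using h unfolding P Q Gamma_mult
    by (auto simp: Gamma_carrier flip_def alt_sym_carrier alt_sym_mult alt_in_sym sym_comp)
qed

lemma alt_sym_closed:
  assumes "p \<in> carrier (alt_sym n)" "q \<in> carrier (alt_sym n)"
  shows "p \<otimes>\<^bsub>alt_sym n\<^esub> q \<in> carrier (alt_sym n)"
proof -
  have "(p, 0) \<otimes>\<^bsub>Gamma n\<^esub> (q, 0) \<in> carrier (Gamma n)"
    using assms by (intro Gamma_closed) (auto simp: Gamma_carrier alt_sym_carrier)
  thus ?thesis using assms(2) by (simp add: Gamma_mult flip_0 Gamma_carrier alt_sym_carrier)
qed

lemma cay_act_apply:
  "x \<in> Alt n \<Longrightarrow> cay_act n ((a, s), k) x = s \<circ> (if k = 0 then x else inv' x) \<circ> inv' s \<circ> inv' a"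
  by (simp add: cay_act_def)

lemma cay_act_closed:
  "a \<in> Alt n \<Longrightarrow> s \<in> Sym n \<Longrightarrow> x \<in> Alt n \<Longrightarrow> cay_act n ((a, s), k) x \<in> Alt n"
  by (simp add: cay_act_apply alt_comp alt_conj alt_group_inv_closed flip: comp_assoc)

lemma cay_act_mult:
  assumes "P \<in> carrier (Gamma n)" "Q \<in> carrier (Gamma n)"
  shows "cay_act n (P \<otimes>\<^bsub>Gamma n\<^esub> Q) = compose (Alt n) (cay_act n P) (cay_act n Q)"
proof
  obtain a s k b t l where P: "P = ((a, s), k)" and Q: "Q = ((b, t), l)"
    by (metis prod.exhaust)
  have h: "a \<in> Alt n" "s \<in> Sym n" "b \<in> Alt n" "t \<in> Sym n" "k \<in> {0, 1}" "l \<in> {0, 1}"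
    using assms P Q by (auto simp: Gamma_carrier)
  have bij: "bij a" "bij s" "bij b" "bij t" using h alt_bij sym_bij by auto
  fix x
  show "cay_act n (P \<otimes>\<^bsub>Gamma n\<^esub> Q) x = compose (Alt n) (cay_act n P) (cay_act n Q) x"
  proof (cases "x \<in> Alt n")
    case False thus ?thesis by (simp add: cay_act_def compose_def P Q Gamma_mult split: prod.splits)
  next
    case True
    have "cay_act n Q x \<in> Alt n" using cay_act_closed h True Q by simp
    thus ?thesis using h bij alt_bij[OF True] True unfolding P Q Gamma_mult compose_def
      by (auto simp: flip_def alt_sym_carrier alt_sym_mult cay_act_apply bij_comp_simps)
  qed
qed

section \<open>The action is by graph automorphisms\<close>

lemma finite_Bij:
  assumes "finite S" shows "finite (Bij S)"
proof (rule finite_subset)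
  show "Bij S \<subseteq> S \<rightarrow>\<^sub>E S" unfolding PiE_def using Bij_imp_funcset Bij_imp_extensional by blast
  show "finite (S \<rightarrow>\<^sub>E S)" using assms by (simp add: finite_PiE)
qed

lemma cay_auts_subgroup:
  assumes "finite (carrier G)"
  shows "subgroup (cay_auts G T) (BijGroup (carrier G))"
proof (rule group.finite_closed_subgroup[OF group_BijGroup])
  show "finite (carrier (BijGroup (carrier G)))"
    using finite_Bij[OF assms] by (simp add: BijGroup_def)
  show "cay_auts G T \<subseteq> carrier (BijGroup (carrier G))"
    by (auto simp: BijGroup_def cay_auts_def)
  show "cay_auts G T \<noteq> {}"
    using id_Bij unfolding cay_auts_def by fastforce
  fix f g assume f: "f \<in> cay_auts G T" and g: "g \<in> cay_auts G T"
  hence fg: "f \<in> Bij (carrier G)" "g \<in> Bij (carrier G)" by (auto simp: cay_auts_def)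
  have "{x, y} \<in> cay_edges G T \<longleftrightarrow> {compose (carrier G) f g x, compose (carrier G) f g y} \<in> cay_edges G T"
    if "x \<in> carrier G" "y \<in> carrier G" for x y
  proof -
    have "g x \<in> carrier G" "g y \<in> carrier G" using Bij_imp_funcset[OF fg(2)] that by auto
    hence "{g x, g y} \<in> cay_edges G T \<longleftrightarrow> {f (g x), f (g y)} \<in> cay_edges G T"
      using f unfolding cay_auts_def by blast
    moreover have "{x, y} \<in> cay_edges G T \<longleftrightarrow> {g x, g y} \<in> cay_edges G T"
      using g that unfolding cay_auts_def by blast
    ultimately show ?thesis using that by (simp add: compose_def)
  qed
  thus "f \<otimes>\<^bsub>BijGroup (carrier G)\<^esub> g \<in> cay_auts G T"
    using fg compose_Bij by (auto simp: BijGroup_def cay_auts_def)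
qed

lemma cay_aut_group_is_group: "finite (carrier G) \<Longrightarrow> group (cay_aut_group G T)"
  using subgroup.subgroup_is_group[OF cay_auts_subgroup group_BijGroup]
  by (simp add: cay_aut_group_def)

lemma finite_cay_aut_group: "finite (carrier G) \<Longrightarrow> finite (carrier (cay_aut_group G T))"
  by (rule finite_subset[OF _ finite_Bij]) (auto simp: cay_aut_group_def BijGroup_def cay_auts_def)

lemma finite_Alt: "finite (Alt n)"
  by (rule finite_subset[OF _ finite_permutations[of "{1..n}"]]) (auto simp: alt_group_carrier)

lemma cay_act_Bij:
  assumes "P \<in> carrier (Gamma n)"
  shows "cay_act n P \<in> Bij (Alt n)"
proof -
  obtain a s k where P: "P = ((a, s), k)" by (metis prod.exhaust)
  have h: "a \<in> Alt n" "s \<in> Sym n" using assms P by (auto simp: Gamma_carrier)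
  have bij: "bij a" "bij s" using h alt_bij sym_bij by auto
  have "inj_on (cay_act n P) (Alt n)"
  proof
    fix x y assume x: "x \<in> Alt n" and y: "y \<in> Alt n" and eq: "cay_act n P x = cay_act n P y"
    have "inv' s \<circ> cay_act n P z \<circ> a \<circ> s = (if k = 0 then z else inv' z)" if "z \<in> Alt n" for z
      using that bij alt_bij[OF that] unfolding P by (simp add: cay_act_apply bij_comp_simps)
    hence "(if k = 0 then x else inv' x) = (if k = 0 then y else inv' y)" using x y eq by metis
    thus "x = y" using alt_bij[OF x] alt_bij[OF y] by (metis inv_inv_eq)
  qed
  moreover have "cay_act n P ` Alt n \<subseteq> Alt n" using cay_act_closed h P by auto
  ultimately have "bij_betw (cay_act n P) (Alt n) (Alt n)"
    using endo_inj_surj[OF finite_Alt] by (simp add: bij_betw_def)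
  moreover have "cay_act n P \<in> extensional (Alt n)" by (simp add: cay_act_def P)
  ultimately show ?thesis by (simp add: Bij_def)
qed

text \<open>The action maps the quotient \<open>y x\<^sup>-\<^sup>1\<close> of two vertices to a conjugate of it or of its
  inverse, so it preserves the 3-cycle connection set.\<close>
lemma cay_act_quotient:
  assumes "P \<in> carrier (Gamma n)" "x \<in> Alt n" "y \<in> Alt n"
  shows "cay_act n P y \<circ> inv' (cay_act n P x) \<in> three_cycles n \<longleftrightarrow> y \<circ> inv' x \<in> three_cycles n"
proof -
  obtain a s k where P: "P = ((a, s), k)" and h: "a \<in> Alt n" "s \<in> Sym n" "k \<in> {0, 1}"
    using assms(1) by (auto simp: Gamma_carrier)
  have bij: "bij a" "bij s" "bij x" "bij y" using h assms alt_bij sym_bij by auto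
  show ?thesis
  proof (cases "k = 0")
    case True
    have "cay_act n P y \<circ> inv' (cay_act n P x) = s \<circ> (y \<circ> inv' x) \<circ> inv' s"
      using assms bij True unfolding P by (simp add: cay_act_apply bij_comp_simps)
    thus ?thesis by (simp only: three_cycles_conj_iff[OF h(2)])
  next
    case False
    have s': "s \<circ> inv' y \<in> Sym n"
      using sym_comp[OF h(2) sym_group_inv_closed[OF alt_in_sym[OF assms(3)]]] .
    have "cay_act n P y \<circ> inv' (cay_act n P x) = (s \<circ> inv' y) \<circ> inv' (y \<circ> inv' x) \<circ> inv' (s \<circ> inv' y)"
      using assms bij False unfolding P by (simp add: cay_act_apply bij_comp_simps)
    moreover have "bij (y \<circ> inv' x)" using bij by (simp add: bij_comp_simps)
    ultimately show ?thesis by (simp only: three_cycles_conj_iff[OF s'] three_cycles_inv_iff)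
  qed
qed

lemma cay_act_cay_auts:
  assumes "P \<in> carrier (Gamma n)"
  shows "cay_act n P \<in> cay_auts (alt_group n) (three_cycles n)"
proof -
  obtain a s k where "P = ((a, s), k)" "a \<in> Alt n" "s \<in> Sym n"
    using assms by (auto simp: Gamma_carrier)
  hence closed: "cay_act n P x \<in> Alt n" if "x \<in> Alt n" for x using cay_act_closed that by simp
  have "{x, y} \<in> cay_edges (alt_group n) (three_cycles n) \<longleftrightarrow>
        {cay_act n P x, cay_act n P y} \<in> cay_edges (alt_group n) (three_cycles n)"
    if "x \<in> Alt n" "y \<in> Alt n" for x y
    using that closed by (simp only: alt_cay_edges_iff cay_act_quotient[OF assms])
  thus ?thesis using cay_act_Bij[OF assms] unfolding cay_auts_def by blast
qed

section \<open>Faithfulness for \<open>n \<ge> 4\<close>\<close>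

lemma three_cycle_in_Alt:
  assumes "distinct [a, b, c]" "{a, b, c} \<subseteq> {1..n}"
  shows "cycle_of_list [a, b, c] \<in> Alt n"
proof -
  have "cycle_of_list [a, b, c] \<in> three_cycles n"
    using assms unfolding mem_Collect_eq by (intro exI[of _ "[a, b, c]"]) simp
  thus ?thesis using three_cycles_incl by blast
qed

lemma sym_centralizer_alt:
  assumes n: "n \<ge> 4" and r: "r \<in> Sym n" and comm: "\<And>x. x \<in> Alt n \<Longrightarrow> r \<circ> x = x \<circ> r"
  shows "r = id"
proof (rule ccontr)
  assume "r \<noteq> id"
  then obtain i where ri: "r i \<noteq> i" by (auto simp: fun_eq_iff)
  have rp: "r permutes {1..n}" using r by (simp add: sym_group_carrier)
  have i: "i \<in> {1..n}" using ri rp by (meson permutes_not_in)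
  define m where "m = r i"
  have m: "m \<in> {1..n}" using permutes_in_image[OF rp] i m_def by blast
  have "card ({1..n} - {i, m}) \<ge> 2"
  proof -
    have "card {1..n} - card {i, m} \<le> card ({1..n} - {i, m})" by (rule diff_card_le_card_Diff) auto
    moreover have "card {i, m} \<le> 2" by (simp add: card_insert_if)
    ultimately show ?thesis using n by simp
  qed
  then obtain j where j: "j \<in> {1..n} - {i, m}"
    by (metis card.empty ex_in_conv not_numeral_le_zero)
  have "card ({1..n} - {i, m, j}) \<ge> 1"
  proof -
    have "card {1..n} - card {i, m, j} \<le> card ({1..n} - {i, m, j})" by (rule diff_card_le_card_Diff) auto
    moreover have "card {i, m, j} \<le> 3" by (simp add: card_insert_if)
    ultimately show ?thesis using n by simp
  qed
  then obtain k where k: "k \<in> {1..n} - {i, m, j}"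
    by (metis card.empty ex_in_conv not_one_le_zero)
  text \<open>The 3-cycle \<open>(m j k)\<close> fixes \<open>i\<close> but not \<open>r i = m\<close>, so it cannot commute with \<open>r\<close>.\<close>
  let ?c = "cycle_of_list [m, j, k]"
  have d: "distinct [m, j, k]" using j k by auto
  have "?c \<in> Alt n" using three_cycle_in_Alt[OF d] j k m by auto
  hence "r (?c i) = ?c (r i)" using comm by (metis comp_apply)
  moreover have "?c i = i" using j k ri m_def by (simp add: transpose_def)
  moreover have "?c m = j" using d by (simp add: transpose_def)
  ultimately show False using j m_def by simp
qed

lemma alt_group_not_commutative:
  assumes "n \<ge> 4" shows "\<exists>x \<in> Alt n. \<exists>y \<in> Alt n. x \<circ> y \<noteq> y \<circ> x"
proof -
  have "cycle_of_list [1, 2, 3] \<in> Alt n" "cycle_of_list [1, 2, 4] \<in> Alt n"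
    using assms by (intro three_cycle_in_Alt; auto)+
  moreover have "(cycle_of_list [1, 2, 3] \<circ> cycle_of_list [1, 2, 4]) (1::nat) = 3"
    "(cycle_of_list [1, 2, 4] \<circ> cycle_of_list [1, 2, 3]) (1::nat) = 4"
    by (simp_all add: transpose_def)
  ultimately show ?thesis by (metis numeral_eq_iff semiring_norm(89))
qed

text \<open>Inversion is an anti-automorphism, so on the nonabelian group \<open>A\<^sub>n\<close> it cannot agree
  with an automorphism such as conjugation.\<close>
lemma conj_neq_conj_inv:
  assumes n: "n \<ge> 4" and s: "s \<in> Sym n" and t: "t \<in> Sym n"
  shows "\<exists>x \<in> Alt n. s \<circ> x \<circ> inv' s \<noteq> t \<circ> inv' x \<circ> inv' t"
proof (rule ccontr)
  assume "\<not> ?thesis"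
  hence eq: "s \<circ> x \<circ> inv' s = t \<circ> inv' x \<circ> inv' t" if "x \<in> Alt n" for x using that by blast
  obtain x y where xy: "x \<in> Alt n" "y \<in> Alt n" "x \<circ> y \<noteq> y \<circ> x"
    using alt_group_not_commutative[OF n] by blast
  have b: "bij s" "bij t" "bij x" "bij y" using s t xy alt_bij sym_bij by auto
  have "s \<circ> (x \<circ> y) \<circ> inv' s = (s \<circ> x \<circ> inv' s) \<circ> (s \<circ> y \<circ> inv' s)"
    using b by (simp add: bij_comp_simps)
  also have "\<dots> = (t \<circ> inv' x \<circ> inv' t) \<circ> (t \<circ> inv' y \<circ> inv' t)"
    using eq[OF xy(1)] eq[OF xy(2)] by (simp only:)
  also have "\<dots> = t \<circ> inv' (y \<circ> x) \<circ> inv' t" using b by (simp add: bij_comp_simps)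
  also have "\<dots> = s \<circ> (y \<circ> x) \<circ> inv' s" using eq[OF alt_comp[OF xy(2,1)]] by (simp only:)
  finally have "inv' s \<circ> (s \<circ> (x \<circ> y) \<circ> inv' s) \<circ> s = inv' s \<circ> (s \<circ> (y \<circ> x) \<circ> inv' s) \<circ> s"
    by simp
  hence "x \<circ> y = y \<circ> x" using b by (simp add: bij_comp_simps)
  thus False using xy by simp
qed

lemma cay_act_inj:
  assumes n: "n \<ge> 4"
  shows "inj_on (cay_act n) (carrier (Gamma n))"
proof
  fix P Q assume "P \<in> carrier (Gamma n)" "Q \<in> carrier (Gamma n)" and PQ: "cay_act n P = cay_act n Q"
  then obtain a s k b t l where P: "P = ((a, s), k)" and Q: "Q = ((b, t), l)"
    and h: "a \<in> Alt n" "s \<in> Sym n" "b \<in> Alt n" "t \<in> Sym n" "k \<in> {0, 1}" "l \<in> {0, 1}"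
    by (auto simp: Gamma_carrier)
  have bij: "bij a" "bij s" "bij b" "bij t" using h alt_bij sym_bij by auto
  have act_id: "cay_act n ((c, u), m) id = inv' c" if "bij u" for c u m
  proof -
    have "id \<in> Alt n" by (simp add: alt_group_carrier permutes_id)
    thus ?thesis using that by (simp add: cay_act_apply bij_comp_simps)
  qed
  have "inv' a = inv' b" using fun_cong[OF PQ, of id] bij by (simp add: P Q act_id)
  hence ab: "a = b" using bij by (metis inv_inv_eq)
  have conj_eq: "s \<circ> (if k = 0 then x else inv' x) \<circ> inv' s = t \<circ> (if l = 0 then x else inv' x) \<circ> inv' t"
    if x: "x \<in> Alt n" for x
  proof -
    have "cay_act n P x \<circ> a = cay_act n Q x \<circ> a" using PQ by simp
    thus ?thesis using x bij ab unfolding P Q by (simp add: cay_act_apply bij_comp_simps)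
  qed
  have kl: "k = l"
  proof (rule ccontr)
    assume "k \<noteq> l"
    hence "(k = 0 \<and> l = 1) \<or> (k = 1 \<and> l = 0)" using h by auto
    thus False
      using conj_neq_conj_inv[OF n h(2) h(4)] conj_neq_conj_inv[OF n h(4) h(2)] conj_eq by force
  qed
  have "inv' t \<circ> s = id"
  proof (rule sym_centralizer_alt[OF n sym_comp[OF sym_group_inv_closed[OF h(4)] h(2)]])
    fix x assume x: "x \<in> Alt n"
    have "s \<circ> x \<circ> inv' s = t \<circ> x \<circ> inv' t"
      using conj_eq[OF x] conj_eq[OF alt_group_inv_closed[OF x]] kl alt_bij[OF x]
      by (cases "k = 0") (simp_all add: inv_inv_eq)
    hence "inv' t \<circ> (s \<circ> x \<circ> inv' s) \<circ> s = inv' t \<circ> (t \<circ> x \<circ> inv' t) \<circ> s" by simp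
    thus "inv' t \<circ> s \<circ> x = x \<circ> (inv' t \<circ> s)" using bij alt_bij[OF x] by (simp add: bij_comp_simps)
  qed
  hence "s = t" using bij by (metis bij_o_inv_o_cancel comp_id)
  thus "P = Q" using P Q ab kl by simp
qed

lemma flip_auto:
  assumes "k \<in> {0, 1}" shows "flip n k \<in> auto (alt_sym n)"
proof (cases "k = 0")
  case True
  have "(\<lambda>q \<in> carrier (alt_sym n). q) \<in> hom (alt_sym n) (alt_sym n)"
    by (rule homI) (auto simp: alt_sym_closed)
  thus ?thesis using True by (simp add: flip_def auto_def id_Bij)
next
  case False
  let ?f = "\<lambda>q \<in> carrier (alt_sym n). (inv' (fst q), fst q \<circ> snd q)"
  have f_closed: "?f q \<in> carrier (alt_sym n)" if "q \<in> carrier (alt_sym n)" for q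
    using that alt_group_inv_closed sym_comp alt_in_sym by (auto simp: alt_sym_carrier)
  have "?f (?f q) = q" if "q \<in> carrier (alt_sym n)" for q
    using that f_closed[OF that] alt_bij by (auto simp: alt_sym_carrier bij_comp_simps)
  hence "bij_betw ?f (carrier (alt_sym n)) (carrier (alt_sym n))"
    using f_closed by (intro bij_betw_byWitness[where f' = ?f]) auto
  moreover have "?f \<in> hom (alt_sym n) (alt_sym n)"
  proof (rule homI)
    fix p q assume p: "p \<in> carrier (alt_sym n)" and q: "q \<in> carrier (alt_sym n)"
    then obtain a s b t where "p = (a, s)" "q = (b, t)" "a \<in> Alt n" "s \<in> Sym n" "b \<in> Alt n" "t \<in> Sym n"
      by (auto simp: alt_sym_carrier)
    moreover have "p \<otimes>\<^bsub>alt_sym n\<^esub> q \<in> carrier (alt_sym n)" using alt_sym_closed p q .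
    ultimately show "?f (p \<otimes>\<^bsub>alt_sym n\<^esub> q) = ?f p \<otimes>\<^bsub>alt_sym n\<^esub> ?f q"
      using p q alt_bij sym_bij by (simp add: alt_sym_mult bij_comp_simps)
  qed (rule f_closed)
  ultimately show ?thesis using False assms by (simp add: flip_def auto_def Bij_def)
qed

lemma flip_hom: "flip n \<in> hom (integer_mod_group 2) (AutoGroup (alt_sym n))"
proof (rule homI)
  fix k assume "k \<in> carrier (integer_mod_group 2)"
  thus "flip n k \<in> carrier (AutoGroup (alt_sym n))"
    using flip_auto by (simp add: integer_mod_group_2_carrier AutoGroup_def)
next
  fix k l assume "k \<in> carrier (integer_mod_group 2)" "l \<in> carrier (integer_mod_group 2)"
  hence kl: "k \<in> {0, 1}" "l \<in> {0, 1}" by (simp_all add: integer_mod_group_2_carrier)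
  hence "flip n k \<in> Bij (carrier (alt_sym n))" "flip n l \<in> Bij (carrier (alt_sym n))"
    using flip_auto by (auto simp: auto_def)
  hence mult: "flip n k \<otimes>\<^bsub>AutoGroup (alt_sym n)\<^esub> flip n l = compose (carrier (alt_sym n)) (flip n k) (flip n l)"
    by (simp add: AutoGroup_def BijGroup_def)
  have "flip n ((k + l) mod 2) q = compose (carrier (alt_sym n)) (flip n k) (flip n l) q" for q
  proof (cases "q \<in> carrier (alt_sym n)")
    case True
    then obtain b t where q: "q = (b, t)" "b \<in> Alt n" "t \<in> Sym n" by (auto simp: alt_sym_carrier)
    hence "(inv' b, b \<circ> t) \<in> carrier (alt_sym n)"
      using alt_group_inv_closed sym_comp alt_in_sym by (auto simp: alt_sym_carrier)
    thus ?thesis using kl True q alt_bij sym_bij by (auto simp: flip_def compose_def bij_comp_simps)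
  qed (simp add: flip_def compose_def)
  thus "flip n (k \<otimes>\<^bsub>integer_mod_group 2\<^esub> l) = flip n k \<otimes>\<^bsub>AutoGroup (alt_sym n)\<^esub> flip n l"
    using mult by auto
qed

definition Gamma_alt :: "nat \<Rightarrow> (((nat \<Rightarrow> nat) \<times> (nat \<Rightarrow> nat)) \<times> int) set"
  where "Gamma_alt n = {((a, id), 0) | a. a \<in> Alt n}"
definition Gamma_sym :: "nat \<Rightarrow> (((nat \<Rightarrow> nat) \<times> (nat \<Rightarrow> nat)) \<times> int) set"
  where "Gamma_sym n = {((id, s), 0) | s. s \<in> Sym n}"
definition Gamma_alt_sym :: "nat \<Rightarrow> (((nat \<Rightarrow> nat) \<times> (nat \<Rightarrow> nat)) \<times> int) set"
  where "Gamma_alt_sym n = carrier (alt_sym n) \<times> {0}"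
definition Gamma_flip :: "(((nat \<Rightarrow> nat) \<times> (nat \<Rightarrow> nat)) \<times> int) set"
  where "Gamma_flip = {((id, id), 0), ((id, id), 1)}"

lemma id_in_Alt: "id \<in> Alt n" by (simp add: alt_group_carrier)
lemma id_in_Sym: "id \<in> Sym n" by (simp add: sym_group_carrier)

lemma Gamma_subsets:
  "Gamma_alt n \<subseteq> carrier (Gamma n)" "Gamma_sym n \<subseteq> carrier (Gamma n)"
  "Gamma_alt_sym n \<subseteq> carrier (Gamma n)" "Gamma_flip \<subseteq> carrier (Gamma n)"
  by (auto simp: Gamma_alt_def Gamma_sym_def Gamma_alt_sym_def Gamma_flip_def Gamma_carrier
      alt_sym_carrier id_in_Alt id_in_Sym)

lemma Gamma_subsets_nonempty:
  "Gamma_alt n \<noteq> {}" "Gamma_sym n \<noteq> {}" "Gamma_alt_sym n \<noteq> {}" "Gamma_flip \<noteq> {}"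
  "carrier (Gamma n) \<noteq> {}"
  using id_in_Alt id_in_Sym
  by (auto simp: Gamma_alt_def Gamma_sym_def Gamma_alt_sym_def Gamma_flip_def Gamma_carrier alt_sym_carrier)

lemma Gamma_alt_sym_mult:
  "p \<in> carrier (alt_sym n) \<Longrightarrow> q \<in> carrier (alt_sym n) \<Longrightarrow> (p, 0) \<otimes>\<^bsub>Gamma n\<^esub> (q, 0) = (p \<otimes>\<^bsub>alt_sym n\<^esub> q, 0)"
  by (simp add: Gamma_mult flip_0)

lemma Gamma_alt_closed: "P \<in> Gamma_alt n \<Longrightarrow> Q \<in> Gamma_alt n \<Longrightarrow> P \<otimes>\<^bsub>Gamma n\<^esub> Q \<in> Gamma_alt n"
  by (auto simp: Gamma_alt_def Gamma_alt_sym_mult alt_sym_carrier alt_sym_mult alt_comp id_in_Sym)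
lemma Gamma_sym_closed: "P \<in> Gamma_sym n \<Longrightarrow> Q \<in> Gamma_sym n \<Longrightarrow> P \<otimes>\<^bsub>Gamma n\<^esub> Q \<in> Gamma_sym n"
  by (auto simp: Gamma_sym_def Gamma_alt_sym_mult alt_sym_carrier alt_sym_mult sym_comp id_in_Alt
      sym_bij bij_o_inv_cancel)
lemma Gamma_alt_sym_closed:
  "P \<in> Gamma_alt_sym n \<Longrightarrow> Q \<in> Gamma_alt_sym n \<Longrightarrow> P \<otimes>\<^bsub>Gamma n\<^esub> Q \<in> Gamma_alt_sym n"
  by (auto simp: Gamma_alt_sym_def Gamma_alt_sym_mult alt_sym_closed)
lemma Gamma_flip_closed: "P \<in> Gamma_flip \<Longrightarrow> Q \<in> Gamma_flip \<Longrightarrow> P \<otimes>\<^bsub>Gamma n\<^esub> Q \<in> Gamma_flip"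
  using id_in_Alt id_in_Sym
  by (auto simp: Gamma_flip_def Gamma_mult flip_0 flip_1 alt_sym_carrier alt_sym_mult)

lemma Gamma_alt_set_mult_sym: "Gamma_alt n <#>\<^bsub>Gamma n\<^esub> Gamma_sym n = Gamma_alt_sym n"
proof
  show "Gamma_alt n <#>\<^bsub>Gamma n\<^esub> Gamma_sym n \<subseteq> Gamma_alt_sym n"
    by (auto simp: set_mult_def Gamma_alt_def Gamma_sym_def Gamma_alt_sym_def Gamma_alt_sym_mult
        alt_sym_carrier alt_sym_mult id_in_Alt id_in_Sym)
  show "Gamma_alt_sym n \<subseteq> Gamma_alt n <#>\<^bsub>Gamma n\<^esub> Gamma_sym n"
  proof
    fix P assume "P \<in> Gamma_alt_sym n"
    then obtain a s where P: "P = ((a, s), 0)" "a \<in> Alt n" "s \<in> Sym n"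
      by (auto simp: Gamma_alt_sym_def alt_sym_carrier)
    hence "P = ((a, id), 0) \<otimes>\<^bsub>Gamma n\<^esub> ((id, s), 0)"
      using id_in_Alt id_in_Sym by (simp add: Gamma_alt_sym_mult alt_sym_carrier alt_sym_mult)
    moreover have "((a, id), 0) \<in> Gamma_alt n" "((id, s), 0) \<in> Gamma_sym n"
      using P by (auto simp: Gamma_alt_def Gamma_sym_def)
    ultimately show "P \<in> Gamma_alt n <#>\<^bsub>Gamma n\<^esub> Gamma_sym n" unfolding set_mult_def by blast
  qed
qed

lemma Gamma_alt_sym_set_mult_flip: "Gamma_alt_sym n <#>\<^bsub>Gamma n\<^esub> Gamma_flip = carrier (Gamma n)"
proof
  show "Gamma_alt_sym n <#>\<^bsub>Gamma n\<^esub> Gamma_flip \<subseteq> carrier (Gamma n)"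
    using Gamma_closed Gamma_subsets unfolding set_mult_def by blast
  show "carrier (Gamma n) \<subseteq> Gamma_alt_sym n <#>\<^bsub>Gamma n\<^esub> Gamma_flip"
  proof
    fix P assume "P \<in> carrier (Gamma n)"
    then obtain a s k where P: "P = ((a, s), k)" "a \<in> Alt n" "s \<in> Sym n" "k \<in> {0, 1}"
      by (auto simp: Gamma_carrier)
    hence "P = ((a, s), 0) \<otimes>\<^bsub>Gamma n\<^esub> ((id, id), k)"
      using id_in_Alt id_in_Sym sym_bij
      by (auto simp: Gamma_mult flip_0 flip_1 alt_sym_carrier alt_sym_mult bij_o_inv_cancel)
    moreover have "((a, s), 0) \<in> Gamma_alt_sym n" "((id, id), k) \<in> Gamma_flip"
      using P by (auto simp: Gamma_alt_sym_def Gamma_flip_def alt_sym_carrier)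
    ultimately show "P \<in> Gamma_alt_sym n <#>\<^bsub>Gamma n\<^esub> Gamma_flip" unfolding set_mult_def by blast
  qed
qed

lemma Gamma_alt_Int_sym: "Gamma_alt n \<inter> Gamma_sym n = {((id, id), 0)}"
  using id_in_Alt id_in_Sym by (auto simp: Gamma_alt_def Gamma_sym_def)

lemma Gamma_alt_sym_Int_flip: "Gamma_alt_sym n \<inter> Gamma_flip = {((id, id), 0)}"
  using id_in_Alt id_in_Sym by (auto simp: Gamma_alt_sym_def Gamma_flip_def alt_sym_carrier)

lemma right_translations_eq:
  "(\<lambda>g. \<lambda>x \<in> Alt n. x \<otimes>\<^bsub>alt_group n\<^esub> g) ` Alt n = cay_act n ` Gamma_alt n"
proof -
  have "(\<lambda>x \<in> Alt n. x \<otimes>\<^bsub>alt_group n\<^esub> g) = cay_act n ((inv' g, id), 0)" if "g \<in> Alt n" for g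
    using alt_bij[OF that] by (simp add: cay_act_def alt_group_mult inv_inv_eq)
  hence "(\<lambda>g. \<lambda>x \<in> Alt n. x \<otimes>\<^bsub>alt_group n\<^esub> g) ` Alt n = (\<lambda>a. cay_act n ((a, id), 0)) ` inv' ` Alt n"
    by (simp add: image_image)
  also have "inv' ` Alt n = Alt n"
  proof
    show "inv' ` Alt n \<subseteq> Alt n" using alt_group_inv_closed by blast
    show "Alt n \<subseteq> inv' ` Alt n"
    proof
      fix x assume "x \<in> Alt n"
      thus "x \<in> inv' ` Alt n"
        using alt_group_inv_closed[of x] inv_inv_eq[OF alt_bij, of x] by (metis image_eqI)
    qed
  qed
  finally show ?thesis by (simp only: Gamma_alt_def setcompr_eq_image image_image Collect_mem_eq)
qed

lemma conjugations_eq: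
  "(\<lambda>\<sigma>. \<lambda>x \<in> Alt n. \<sigma> \<circ> x \<circ> inv' \<sigma>) ` Sym n = cay_act n ` Gamma_sym n"
  by (auto simp: Gamma_sym_def cay_act_def image_iff)

lemma inversion_eq: "(\<lambda>x \<in> Alt n. inv\<^bsub>alt_group n\<^esub> x) = cay_act n ((id, id), 1)"
  by (simp add: cay_act_def alt_group_inv_equality cong: restrict_cong)

lemma cay_aut_group_one: "\<one>\<^bsub>cay_aut_group (alt_group n) (three_cycles n)\<^esub> = cay_act n ((id, id), 0)"
  by (simp add: cay_aut_group_def BijGroup_def cay_act_def)

lemma cay_act_embedding:
  assumes "n \<ge> 4"
  shows "finite_group_embedding (cay_aut_group (alt_group n) (three_cycles n)) (Gamma n) (cay_act n)"
proof (intro finite_group_embedding.intro finite_group_embedding_axioms.intro)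
  show "group (cay_aut_group (alt_group n) (three_cycles n))"
    using cay_aut_group_is_group[OF finite_Alt] .
  show "finite (carrier (cay_aut_group (alt_group n) (three_cycles n)))"
    using finite_cay_aut_group[OF finite_Alt] .
  show "cay_act n P \<in> carrier (cay_aut_group (alt_group n) (three_cycles n))"
    if "P \<in> carrier (Gamma n)" for P
    using cay_act_cay_auts[OF that] by (simp add: cay_aut_group_def BijGroup_def)
  show "inj_on (cay_act n) (carrier (Gamma n))" using cay_act_inj[OF assms] .
  show "cay_act n (P \<otimes>\<^bsub>Gamma n\<^esub> Q) =
          cay_act n P \<otimes>\<^bsub>cay_aut_group (alt_group n) (three_cycles n)\<^esub> cay_act n Q"
    if "P \<in> carrier (Gamma n)" "Q \<in> carrier (Gamma n)" for P Q
    using cay_act_mult[OF that] cay_act_Bij[OF that(1)] cay_act_Bij[OF that(2)]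
    by (simp add: cay_aut_group_def BijGroup_def)
qed

context
  fixes n :: nat
  assumes n: "n \<ge> 4"
begin

interpretation finite_group_embedding "cay_aut_group (alt_group n) (three_cycles n)" "Gamma n" "cay_act n"
  by (rule cay_act_embedding[OF n])

lemma image_Gamma_alt_normal:
  "cay_act n ` Gamma_alt n \<lhd> (cay_aut_group (alt_group n) (three_cycles n))\<lparr>carrier := cay_act n ` Gamma_alt_sym n\<rparr>"
proof -
  have "Gamma_alt n = {P \<in> Gamma_alt_sym n. snd (fst P) = \<one>\<^bsub>sym_group n\<^esub>}"
    by (auto simp: Gamma_alt_def Gamma_alt_sym_def alt_sym_carrier sym_group_one id_in_Sym)
  moreover have "snd (fst (P \<otimes>\<^bsub>Gamma n\<^esub> Q)) = snd (fst P) \<otimes>\<^bsub>sym_group n\<^esub> snd (fst Q)"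
    if "P \<in> Gamma_alt_sym n" "Q \<in> Gamma_alt_sym n" for P Q
    using that by (auto simp: Gamma_alt_sym_def Gamma_alt_sym_mult alt_sym_mult sym_group_mult)
  ultimately show ?thesis
    using image_normal[OF Gamma_subsets(3) Gamma_subsets_nonempty(3) Gamma_alt_sym_closed
        sym_group_is_group, of "\<lambda>P. snd (fst P)"]
    by (auto simp: Gamma_alt_sym_def alt_sym_carrier)
qed

lemma image_Gamma_alt_sym_normal:
  "cay_act n ` Gamma_alt_sym n \<lhd> (cay_aut_group (alt_group n) (three_cycles n))\<lparr>carrier := cay_act n ` carrier (Gamma n)\<rparr>"
proof -
  have "cay_act n ` {P \<in> carrier (Gamma n). snd P = \<one>\<^bsub>integer_mod_group 2\<^esub>}
      \<lhd> (cay_aut_group (alt_group n) (three_cycles n))\<lparr>carrier := cay_act n ` carrier (Gamma n)\<rparr>"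
  proof (rule image_normal[OF subset_refl Gamma_subsets_nonempty(5) Gamma_closed group_integer_mod_group])
    show "snd P \<in> carrier (integer_mod_group 2)" if "P \<in> carrier (Gamma n)" for P
      using that by (auto simp: Gamma_carrier integer_mod_group_2_carrier)
    show "snd (P \<otimes>\<^bsub>Gamma n\<^esub> Q) = snd P \<otimes>\<^bsub>integer_mod_group 2\<^esub> snd Q" for P Q
      by (cases P, cases Q) (simp add: Gamma_mult)
  qed
  moreover have "{P \<in> carrier (Gamma n). snd P = \<one>\<^bsub>integer_mod_group 2\<^esub>} = Gamma_alt_sym n"
    by (auto simp: Gamma_alt_sym_def Gamma_carrier alt_sym_carrier)
  ultimately show ?thesis by simp
qed

lemma image_Gamma_alt_iso:
  "(cay_aut_group (alt_group n) (three_cycles n))\<lparr>carrier := cay_act n ` Gamma_alt n\<rparr> \<cong> alt_group n"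
proof (rule image_iso[OF Gamma_subsets(1)])
  show "bij_betw (\<lambda>a. ((a, id), 0)) (Alt n) (Gamma_alt n)"
    by (auto simp: bij_betw_def inj_on_def Gamma_alt_def)
qed (auto simp: Gamma_alt_sym_mult alt_sym_carrier alt_sym_mult alt_group_mult alt_comp id_in_Sym)

lemma image_Gamma_sym_iso:
  "(cay_aut_group (alt_group n) (three_cycles n))\<lparr>carrier := cay_act n ` Gamma_sym n\<rparr> \<cong> sym_group n"
proof (rule image_iso[OF Gamma_subsets(2)])
  show "bij_betw (\<lambda>s. ((id, s), 0)) (Sym n) (Gamma_sym n)"
    by (auto simp: bij_betw_def inj_on_def Gamma_sym_def)
qed (auto simp: Gamma_alt_sym_mult alt_sym_carrier alt_sym_mult sym_group_mult sym_comp id_in_Alt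
    sym_bij bij_o_inv_cancel)

lemma image_Gamma_alt_sym_iso:
  "(cay_aut_group (alt_group n) (three_cycles n))\<lparr>carrier := cay_act n ` Gamma_alt_sym n\<rparr> \<cong> alt_sym n"
proof (rule image_iso[OF Gamma_subsets(3)])
  show "bij_betw (\<lambda>p. (p, 0)) (carrier (alt_sym n)) (Gamma_alt_sym n)"
    by (auto simp: bij_betw_def inj_on_def Gamma_alt_sym_def)
qed (simp_all add: Gamma_alt_sym_mult alt_sym_closed)

lemma image_Gamma_iso:
  "(cay_aut_group (alt_group n) (three_cycles n))\<lparr>carrier := cay_act n ` carrier (Gamma n)\<rparr> \<cong> Gamma n"
  by (rule image_iso[OF subset_refl bij_betw_id]) (simp_all add: Gamma_closed)

end

theorem theorem2p2:
  fixes n :: nat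
  assumes "n \<ge> 4"
  defines "A \<equiv> alt_group n"
      and "S \<equiv> sym_group n"
      and "Aut \<equiv> cay_aut_group (alt_group n) (three_cycles n)"
      and "R \<equiv> (\<lambda>g. \<lambda>x \<in> carrier (alt_group n). x \<otimes>\<^bsub>alt_group n\<^esub> g) ` carrier (alt_group n)"
      and "I \<equiv> (\<lambda>\<sigma>. \<lambda>x \<in> carrier (alt_group n). \<sigma> \<circ> x \<circ> inv' \<sigma>) ` carrier (sym_group n)"
      and "h \<equiv> (\<lambda>x \<in> carrier (alt_group n). inv\<^bsub>alt_group n\<^esub> x)"
  shows "subgroup R Aut \<and> subgroup I Aut \<and> subgroup {\<one>\<^bsub>Aut\<^esub>, h} Aut
       \<and> h \<noteq> \<one>\<^bsub>Aut\<^esub>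
       \<and> subgroup (R <#>\<^bsub>Aut\<^esub> I) Aut
       \<and> subgroup ((R <#>\<^bsub>Aut\<^esub> I) <#>\<^bsub>Aut\<^esub> {\<one>\<^bsub>Aut\<^esub>, h}) Aut
       \<and> R \<lhd> Aut\<lparr>carrier := R <#>\<^bsub>Aut\<^esub> I\<rparr>
       \<and> R \<inter> I = {\<one>\<^bsub>Aut\<^esub>}
       \<and> (R <#>\<^bsub>Aut\<^esub> I) \<lhd> Aut\<lparr>carrier := (R <#>\<^bsub>Aut\<^esub> I) <#>\<^bsub>Aut\<^esub> {\<one>\<^bsub>Aut\<^esub>, h}\<rparr>
       \<and> (R <#>\<^bsub>Aut\<^esub> I) \<inter> {\<one>\<^bsub>Aut\<^esub>, h} = {\<one>\<^bsub>Aut\<^esub>}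
       \<and> Aut\<lparr>carrier := R\<rparr> \<cong> A
       \<and> Aut\<lparr>carrier := I\<rparr> \<cong> S
       \<and> Aut\<lparr>carrier := R <#>\<^bsub>Aut\<^esub> I\<rparr> \<cong> semidirect A S (\<lambda>\<sigma> a. \<sigma> \<circ> a \<circ> inv' \<sigma>)
       \<and> (\<exists>\<psi>. \<psi> \<in> hom (integer_mod_group 2) (AutoGroup (semidirect A S (\<lambda>\<sigma> a. \<sigma> \<circ> a \<circ> inv' \<sigma>)))
            \<and> Aut\<lparr>carrier := (R <#>\<^bsub>Aut\<^esub> I) <#>\<^bsub>Aut\<^esub> {\<one>\<^bsub>Aut\<^esub>, h}\<rparr>
                \<cong> semidirect (semidirect A S (\<lambda>\<sigma> a. \<sigma> \<circ> a \<circ> inv' \<sigma>)) (integer_mod_group 2) \<psi>)"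
proof -
  interpret E: finite_group_embedding Aut "Gamma n" "cay_act n"
    unfolding Aut_def by (rule cay_act_embedding[OF assms(1)])
  have one: "\<one>\<^bsub>Aut\<^esub> = cay_act n ((id, id), 0)" unfolding Aut_def by (rule cay_aut_group_one)
  have R: "R = cay_act n ` Gamma_alt n" unfolding R_def by (rule right_translations_eq)
  have I: "I = cay_act n ` Gamma_sym n" unfolding I_def by (rule conjugations_eq)
  have h: "h = cay_act n ((id, id), 1)" unfolding h_def by (rule inversion_eq)
  have H: "{\<one>\<^bsub>Aut\<^esub>, h} = cay_act n ` Gamma_flip" by (simp add: one h Gamma_flip_def)
  have RI: "cay_act n ` Gamma_alt n <#>\<^bsub>Aut\<^esub> cay_act n ` Gamma_sym n = cay_act n ` Gamma_alt_sym n"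
    by (simp add: E.image_set_mult Gamma_subsets Gamma_alt_set_mult_sym)
  have RIH: "cay_act n ` Gamma_alt_sym n <#>\<^bsub>Aut\<^esub> cay_act n ` Gamma_flip = cay_act n ` carrier (Gamma n)"
    by (simp add: E.image_set_mult Gamma_subsets Gamma_alt_sym_set_mult_flip)
  have "h \<noteq> \<one>\<^bsub>Aut\<^esub>"
    using inj_onD[OF E.embed_inj, of "((id, id), 1)" "((id, id), 0)"] id_in_Alt id_in_Sym
    by (auto simp: one h Gamma_carrier)
  moreover have "R \<inter> I = {\<one>\<^bsub>Aut\<^esub>}" "cay_act n ` Gamma_alt_sym n \<inter> cay_act n ` Gamma_flip = {\<one>\<^bsub>Aut\<^esub>}"
    by (simp_all only: R I one Gamma_alt_Int_sym Gamma_alt_sym_Int_flip image_insert image_empty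
        flip: inj_on_image_Int[OF E.embed_inj Gamma_subsets(1,2)] inj_on_image_Int[OF E.embed_inj Gamma_subsets(3,4)])
  moreover have "\<exists>\<psi>. \<psi> \<in> hom (integer_mod_group 2) (AutoGroup (semidirect A S (\<lambda>\<sigma> a. \<sigma> \<circ> a \<circ> inv' \<sigma>)))
      \<and> Aut\<lparr>carrier := cay_act n ` carrier (Gamma n)\<rparr>
          \<cong> semidirect (semidirect A S (\<lambda>\<sigma> a. \<sigma> \<circ> a \<circ> inv' \<sigma>)) (integer_mod_group 2) \<psi>"
    using flip_hom image_Gamma_iso[OF assms(1)] unfolding Aut_def A_def S_def Gamma_def alt_sym_def
    by blast
  ultimately show ?thesis
    unfolding R I H RI RIH
    using E.image_subgroup[OF Gamma_subsets(1) Gamma_subsets_nonempty(1) Gamma_alt_closed]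
      E.image_subgroup[OF Gamma_subsets(2) Gamma_subsets_nonempty(2) Gamma_sym_closed]
      E.image_subgroup[OF Gamma_subsets(3) Gamma_subsets_nonempty(3) Gamma_alt_sym_closed]
      E.image_subgroup[OF Gamma_subsets(4) Gamma_subsets_nonempty(4) Gamma_flip_closed]
      E.image_subgroup[OF subset_refl Gamma_subsets_nonempty(5) Gamma_closed]
      image_Gamma_alt_normal[OF assms(1), folded Aut_def]
      image_Gamma_alt_sym_normal[OF assms(1), folded Aut_def]
      image_Gamma_alt_iso[OF assms(1), folded Aut_def A_def]
      image_Gamma_sym_iso[OF assms(1), folded Aut_def S_def]
      image_Gamma_alt_sym_iso[OF assms(1), unfolded alt_sym_def, folded Aut_def A_def S_def]
    by blast
qed

end
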